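(* Let $G$ be a simple graph with $n$ vertices. Then $\gamma(G)=n-1$ if and only if $G$ is isomorphic to the path $P_n$ on $n$ vertices.
   Context: For a graph $G$ with vertex set $V$, let $X_G=\{x_u\mid u\in V\}$ be indeterminates and $L(G,X_G)$ the matrix with $L_{u,u}=x_u$ and $L_{u,v}=-m_{uv}$ ($u\neq v$), $m_{uv}$ the number of edges between $u$ and $v$. The $j$-critical ideal $I_j(G,X_G)\subseteq\mathbb{Z}[X_G]$ is generated by all $j\times j$ minors of $L(G,X_G)$. The algebraic co-rank is $\gamma(G)=\max\{j\mid I_j(G,X_G)=\mathbb{Z}[X_G]\}$. *)

theory Defs
  imports "HOL-Library.Poly_Mapping" "Jordan_Normal_Form.Determinant" "Jordan_Normal_Form.DL_Submatrix"
begin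

text \<open>Multivariate integer polynomials Z[x_0, x_1, ...] : monomials are finitely supported
  exponent vectors, polynomials finitely supported coefficient maps.\<close>
type_synonym zpoly = "(nat \<Rightarrow>\<^sub>0 nat) \<Rightarrow>\<^sub>0 int"

definition Var :: "nat \<Rightarrow> zpoly" where
  "Var u = Poly_Mapping.single (Poly_Mapping.single u 1) 1"

definition ideal_gen :: "'r::comm_ring_1 set \<Rightarrow> 'r set" where
  "ideal_gen S = {\<Sum>a\<in>A. c a * a | A c. finite A \<and> A \<subseteq> S}"

definition simple_graph :: "nat \<Rightarrow> (nat \<Rightarrow> nat \<Rightarrow> bool) \<Rightarrow> bool" where
  "simple_graph n E \<longleftrightarrow> (\<forall>u<n. \<forall>v<n. E u v \<longrightarrow> E v u) \<and> (\<forall>u<n. \<not> E u u)"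

definition gen_laplacian :: "nat \<Rightarrow> (nat \<Rightarrow> nat \<Rightarrow> bool) \<Rightarrow> zpoly mat" where
  "gen_laplacian n E = mat n n (\<lambda>(u,v). if u = v then Var u else if E u v then -1 else 0)"

definition minors :: "'r::comm_ring_1 mat \<Rightarrow> nat \<Rightarrow> 'r set" where
  "minors A j = {det (submatrix A I J) | I J. I \<subseteq> {0..<dim_row A} \<and> J \<subseteq> {0..<dim_col A}
                  \<and> card I = j \<and> card J = j}"

definition critical_ideal :: "nat \<Rightarrow> (nat \<Rightarrow> nat \<Rightarrow> bool) \<Rightarrow> nat \<Rightarrow> zpoly set" where
  "critical_ideal n E j = ideal_gen (minors (gen_laplacian n E) j)"

definition alg_corank :: "nat \<Rightarrow> (nat \<Rightarrow> nat \<Rightarrow> bool) \<Rightarrow> nat" where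
  "alg_corank n E = (GREATEST j. critical_ideal n E j = UNIV)"

definition path_graph :: "nat \<Rightarrow> nat \<Rightarrow> bool" where
  "path_graph u v \<longleftrightarrow> u + 1 = v \<or> v + 1 = u"

definition graph_iso :: "nat \<Rightarrow> (nat \<Rightarrow> nat \<Rightarrow> bool) \<Rightarrow> (nat \<Rightarrow> nat \<Rightarrow> bool) \<Rightarrow> bool" where
  "graph_iso n E F \<longleftrightarrow> (\<exists>f. bij_betw f {0..<n} {0..<n} \<and>
      (\<forall>u<n. \<forall>v<n. E u v \<longleftrightarrow> F (f u) (f v)))"

end

theory Submission
  imports Defs "HOL-Library.Z2"
begin

text \<open>Specialising \<open>X\<^sub>G\<close> to values in \<open>GF(2)\<close> is a ring homomorphism, so \<open>I\<^sub>j(G,X\<^sub>G)\<close> is proper as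
  soon as one specialisation kills all \<open>j\<times>j\<close> minors. With \<open>x\<^sub>u = deg u\<close> the all-ones vector is a null
  vector, killing the \<open>n\<times>n\<close> minor, so \<open>\<gamma>(G) \<le> n - 1\<close>; and if some specialisation has nullity at least
  two, then for every column there is a null vector vanishing there, which kills every
  \<open>(n-1)\<times>(n-1)\<close> minor. Pivoting on a diagonal entry \<open>x\<^sub>v = 1\<close> shows that nullity two for the local
  complement of \<open>G\<close> at \<open>v\<close>, minus \<open>v\<close>, lifts to \<open>G\<close>. So if \<open>\<gamma>(G) = n - 1\<close>, by induction every
  such local complement is a path, and a case analysis on degrees shows that then \<open>G\<close> is a path.
  Conversely, for the path the minor omitting the row of one end and the column of the other is
  triangular with diagonal \<open>-1\<close>, hence a unit.\<close>

definition monom_eval :: "(nat \<Rightarrow> 'a::comm_ring_1) \<Rightarrow> (nat \<Rightarrow>\<^sub>0 nat) \<Rightarrow> 'a" where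
  "monom_eval x m = (\<Prod>i\<in>Poly_Mapping.keys m. x i ^ Poly_Mapping.lookup m i)"

definition poly_eval :: "(nat \<Rightarrow> 'a::comm_ring_1) \<Rightarrow> zpoly \<Rightarrow> 'a" where
  "poly_eval x p = (\<Sum>m\<in>Poly_Mapping.keys p. of_int (Poly_Mapping.lookup p m) * monom_eval x m)"

lemma monom_eval_superset:
  "finite S \<Longrightarrow> Poly_Mapping.keys m \<subseteq> S \<Longrightarrow> monom_eval x m = (\<Prod>i\<in>S. x i ^ Poly_Mapping.lookup m i)"
  unfolding monom_eval_def by (rule prod.mono_neutral_left) (auto simp: in_keys_iff)

lemma monom_eval_0 [simp]: "monom_eval x 0 = 1"
  by (simp add: monom_eval_def)

lemma monom_eval_add: "monom_eval x (m + m') = monom_eval x m * monom_eval x m'"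
proof -
  let ?S = "Poly_Mapping.keys m \<union> Poly_Mapping.keys m'"
  have "monom_eval x (m + m') = (\<Prod>i\<in>?S. x i ^ Poly_Mapping.lookup (m + m') i)"
    by (rule monom_eval_superset) (auto simp: keys_add)
  also have "\<dots> = (\<Prod>i\<in>?S. x i ^ Poly_Mapping.lookup m i) * (\<Prod>i\<in>?S. x i ^ Poly_Mapping.lookup m' i)"
    by (simp add: lookup_add power_add prod.distrib)
  also have "\<dots> = monom_eval x m * monom_eval x m'"
    using monom_eval_superset[of ?S m x] monom_eval_superset[of ?S m' x] by simp
  finally show ?thesis .
qed

lemma poly_eval_superset:
  "finite S \<Longrightarrow> Poly_Mapping.keys p \<subseteq> S \<Longrightarrow>
    poly_eval x p = (\<Sum>m\<in>S. of_int (Poly_Mapping.lookup p m) * monom_eval x m)"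
  unfolding poly_eval_def by (rule sum.mono_neutral_left) (auto simp: in_keys_iff)

lemma poly_eval_0 [simp]: "poly_eval x 0 = 0"
  by (simp add: poly_eval_def)

lemma poly_eval_single: "poly_eval x (Poly_Mapping.single m c) = of_int c * monom_eval x m"
  by (simp add: poly_eval_def)

lemma poly_eval_add: "poly_eval x (p + q) = poly_eval x p + poly_eval x q"
proof -
  let ?S = "Poly_Mapping.keys p \<union> Poly_Mapping.keys q"
  have "poly_eval x (p + q) = (\<Sum>m\<in>?S. of_int (Poly_Mapping.lookup (p + q) m) * monom_eval x m)"
    by (rule poly_eval_superset) (auto simp: keys_add)
  also have "\<dots> = (\<Sum>m\<in>?S. of_int (Poly_Mapping.lookup p m) * monom_eval x m)
                 + (\<Sum>m\<in>?S. of_int (Poly_Mapping.lookup q m) * monom_eval x m)"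
    by (simp add: lookup_add distrib_right sum.distrib)
  also have "\<dots> = poly_eval x p + poly_eval x q"
    using poly_eval_superset[of ?S p x] poly_eval_superset[of ?S q x] by simp
  finally show ?thesis .
qed

lemma poly_eval_sum: "poly_eval x (\<Sum>i\<in>A. f i) = (\<Sum>i\<in>A. poly_eval x (f i))"
  by (induction A rule: infinite_finite_induct) (auto simp: poly_eval_add)

lemma sum_single_lookup: "(\<Sum>m\<in>Poly_Mapping.keys p. Poly_Mapping.single m (Poly_Mapping.lookup p m)) = p"
proof (rule poly_mapping_eqI)
  fix k
  have "Poly_Mapping.lookup (\<Sum>m\<in>Poly_Mapping.keys p. Poly_Mapping.single m (Poly_Mapping.lookup p m)) k
      = (\<Sum>m\<in>Poly_Mapping.keys p. if m = k then Poly_Mapping.lookup p m else 0)"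
    by (simp add: lookup_sum lookup_single when_def)
  also have "\<dots> = Poly_Mapping.lookup p k"
    by (cases "k \<in> Poly_Mapping.keys p") (auto simp: sum.delta' in_keys_iff)
  finally show "Poly_Mapping.lookup (\<Sum>m\<in>Poly_Mapping.keys p. Poly_Mapping.single m (Poly_Mapping.lookup p m)) k
      = Poly_Mapping.lookup p k" .
qed

lemma poly_eval_mult: "poly_eval x (p * q) = poly_eval x p * poly_eval x q"
proof -
  let ?t = "\<lambda>p m. Poly_Mapping.single m (Poly_Mapping.lookup p m)"
  have "p * q = (\<Sum>m\<in>Poly_Mapping.keys p. \<Sum>m'\<in>Poly_Mapping.keys q. ?t p m * ?t q m')"
    by (simp add: sum_single_lookup sum_distrib_left sum_distrib_right flip: sum_product)
  hence "poly_eval x (p * q) = (\<Sum>m\<in>Poly_Mapping.keys p. \<Sum>m'\<in>Poly_Mapping.keys q.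
           of_int (Poly_Mapping.lookup p m) * monom_eval x m * (of_int (Poly_Mapping.lookup q m') * monom_eval x m'))"
    by (simp add: poly_eval_sum mult_single poly_eval_single monom_eval_add mult_ac)
  also have "\<dots> = poly_eval x p * poly_eval x q"
    by (simp add: poly_eval_def sum_product)
  finally show ?thesis .
qed

interpretation poly_eval: comm_ring_hom "poly_eval x" for x
proof
  show "poly_eval x 1 = 1"
    using poly_eval_single[of x 0 1] by (simp flip: one_poly_mapping.abs_eq)
qed (simp_all add: poly_eval_add poly_eval_mult)

lemma poly_eval_Var [simp]: "poly_eval x (Var u) = x u"
  by (simp add: Var_def poly_eval_single monom_eval_def)

lemma ideal_gen_eq_UNIV_if_unit:
  assumes "a \<in> S" and "a dvd 1"
  shows "ideal_gen S = UNIV"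
proof -
  obtain b where b: "1 = a * b" using assms(2) by (elim dvdE)
  have "q \<in> ideal_gen S" for q
  proof -
    have "(q * b) * a = q" by (metis b mult.assoc mult.commute mult.right_neutral)
    hence "q = (\<Sum>s\<in>{a}. (q * b) * s)" by simp
    thus ?thesis unfolding ideal_gen_def using assms(1)
      by (intro CollectI exI[of _ "{a}"] exI[of _ "\<lambda>_. q * b"]) auto
  qed
  thus ?thesis by auto
qed

lemma ideal_gen_ne_UNIV_if_hom_vanishes:
  fixes h :: "'r::comm_ring_1 \<Rightarrow> 's::comm_ring_1"
  assumes "comm_ring_hom h" and "\<forall>a\<in>S. h a = 0"
  shows "ideal_gen S \<noteq> UNIV"
proof
  interpret h: comm_ring_hom h by fact
  assume "ideal_gen S = UNIV"
  then obtain A c where A: "finite A" "A \<subseteq> S" and one: "1 = (\<Sum>a\<in>A. c a * a)"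
    unfolding ideal_gen_def by blast
  have "h 1 = (\<Sum>a\<in>A. h (c a) * h a)" unfolding one by (simp add: h.hom_sum h.hom_mult)
  also have "\<dots> = 0" using A assms(2) by (intro sum.neutral) auto
  finally show False by simp
qed

lemma dim_submatrix_subset:
  "I \<subseteq> {0..<dim_row A} \<Longrightarrow> dim_row (submatrix A I J) = card I"
  "J \<subseteq> {0..<dim_col A} \<Longrightarrow> dim_col (submatrix A I J) = card J"
proof -
  have sub: "{i. i < k \<and> i \<in> K} = K" if "K \<subseteq> {0..<k}" for k K using that by auto
  show "I \<subseteq> {0..<dim_row A} \<Longrightarrow> dim_row (submatrix A I J) = card I"
    "J \<subseteq> {0..<dim_col A} \<Longrightarrow> dim_col (submatrix A I J) = card J"
    by (metis dim_submatrix(1) sub, metis dim_submatrix(2) sub)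
qed

lemma submatrix_index_subset:
  assumes "I \<subseteq> {0..<dim_row A}" "J \<subseteq> {0..<dim_col A}" "i < card I" "j < card J"
  shows "submatrix A I J $$ (i, j) = A $$ (pick I i, pick J j)"
  using assms dim_submatrix[of A I J] dim_submatrix_subset[of I A J] dim_submatrix_subset[of J A I]
  by (auto intro: submatrix_index)

lemma map_submatrix: "map_mat h (submatrix A I J) = submatrix (map_mat h A) I J"
  by (rule eq_matI) (simp_all add: dim_submatrix submatrix_index pick_le)

lemma (in comm_ring_hom) hom_det_submatrix:
  "hom (det (submatrix A I J)) = det (submatrix (map_mat hom A) I J)"
  by (simp flip: map_submatrix)

lemma bij_betw_pick: "finite J \<Longrightarrow> bij_betw (pick J) {0..<card J} J"
proof -
  assume fin: "finite J"
  have "inj_on (pick J) {0..<card J}"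
    by (rule inj_onI) (metis atLeastLessThan_iff linorder_neqE_nat pick_mono less_irrefl)
  moreover have "pick J ` {0..<card J} = J"
  proof
    show "pick J ` {0..<card J} \<subseteq> J" using pick_in_set by auto
    show "J \<subseteq> pick J ` {0..<card J}"
    proof
      fix s assume s: "s \<in> J"
      have "card {a\<in>J. a < s} < card J" using fin s by (intro psubset_card_mono) auto
      moreover have "s = pick J (card {a\<in>J. a < s})" using pick_card_in_set[OF s] by simp
      ultimately show "s \<in> pick J ` {0..<card J}" by auto
    qed
  qed
  ultimately show ?thesis unfolding bij_betw_def by blast
qed

text \<open>A null vector supported on the column set \<open>J\<close> restricts to a null vector of the square
  submatrix on rows \<open>I\<close> and columns \<open>J\<close>.\<close>

lemma det_submatrix_eq_0_if_null_vector:
  fixes A :: "'a::field mat"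
  assumes null: "\<forall>r<dim_row A. (\<Sum>s<dim_col A. A $$ (r, s) * z s) = 0"
    and I: "I \<subseteq> {0..<dim_row A}" and J: "J \<subseteq> {0..<dim_col A}" and card: "card I = card J"
    and supp: "\<forall>s<dim_col A. s \<notin> J \<longrightarrow> z s = 0" and nz: "\<exists>s\<in>J. z s \<noteq> 0"
  shows "det (submatrix A I J) = 0"
proof -
  let ?k = "card J" and ?M = "submatrix A I J"
  have finJ: "finite J" using J finite_subset by blast
  have M: "?M \<in> carrier_mat ?k ?k" using dim_submatrix_subset(1)[OF I] dim_submatrix_subset(2)[OF J] card by auto
  define v where "v = vec ?k (\<lambda>j. z (pick J j))"
  have "v \<noteq> 0\<^sub>v ?k"
  proof
    assume v0: "v = 0\<^sub>v ?k"
    obtain s where s: "s \<in> J" "z s \<noteq> 0" using nz by blast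
    then obtain j where j: "j < ?k" "pick J j = s"
      using bij_betw_pick[OF finJ] unfolding bij_betw_def by (metis atLeastLessThan_iff imageE)
    have "v $ j = 0" using v0 j by simp
    thus False using j s by (simp add: v_def)
  qed
  moreover have "?M *\<^sub>v v = 0\<^sub>v ?k"
  proof (rule eq_vecI)
    fix i assume "i < dim_vec (0\<^sub>v ?k)"
    hence i: "i < ?k" by simp
    have row: "pick I i < dim_row A" using pick_in_set[of i I] i card I by auto
    have "(?M *\<^sub>v v) $ i = row ?M i \<bullet> v" using i M by auto
    also have "\<dots> = (\<Sum>j\<in>{0..<?k}. row ?M i $ j * v $ j)"
      unfolding scalar_prod_def by (simp add: v_def)
    also have "\<dots> = (\<Sum>j\<in>{0..<?k}. ?M $$ (i, j) * v $ j)"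
      using i M by (intro sum.cong) auto
    also have "\<dots> = (\<Sum>j<?k. A $$ (pick I i, pick J j) * z (pick J j))"
      using i I J card by (intro sum.cong) (auto simp: v_def submatrix_index_subset atLeast0LessThan)
    also have "\<dots> = (\<Sum>s\<in>J. A $$ (pick I i, s) * z s)"
      using sum.reindex_bij_betw[OF bij_betw_pick[OF finJ], of "\<lambda>s. A $$ (pick I i, s) * z s"]
      by (simp add: atLeast0LessThan)
    also have "\<dots> = (\<Sum>s<dim_col A. A $$ (pick I i, s) * z s)"
      using J supp by (intro sum.mono_neutral_left) auto
    also have "\<dots> = 0" using null row by blast
    finally show "(?M *\<^sub>v v) $ i = 0\<^sub>v ?k $ i" using i by simp
  qed (use M in simp)
  moreover have "v \<in> carrier_vec ?k" by (simp add: v_def)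
  ultimately show ?thesis using det_0_iff_vec_prod_zero_field[OF M] by blast
qed

lemma dim_gen_laplacian [simp]:
  "dim_row (gen_laplacian n E) = n" "dim_col (gen_laplacian n E) = n"
  by (simp_all add: gen_laplacian_def)

lemma gen_laplacian_index:
  "u < n \<Longrightarrow> v < n \<Longrightarrow> gen_laplacian n E $$ (u, v) = (if u = v then Var u else if E u v then -1 else 0)"
  by (simp add: gen_laplacian_def)

lemma critical_ideal_0: "critical_ideal n E 0 = UNIV"
proof -
  have "det (submatrix (gen_laplacian n E) {} {}) \<in> minors (gen_laplacian n E) 0"
    unfolding minors_def by fastforce
  moreover have "det (submatrix (gen_laplacian n E) {} {}) = 1"
    by (simp add: submatrix_def det_def)
  ultimately show ?thesis
    unfolding critical_ideal_def by (intro ideal_gen_eq_UNIV_if_unit) auto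
qed

lemma critical_ideal_ne_UNIV_if_gt:
  assumes "n < j"
  shows "critical_ideal n E j \<noteq> UNIV"
proof -
  have "card I \<noteq> j" if "I \<subseteq> {0..<n}" for I
    using assms card_mono[OF _ that] by fastforce
  hence "minors (gen_laplacian n E) j = {}"
    unfolding minors_def by auto
  thus ?thesis
    unfolding critical_ideal_def by (intro ideal_gen_ne_UNIV_if_hom_vanishes[OF poly_eval.comm_ring_hom_axioms]) simp
qed

lemma critical_ideal_alg_corank: "critical_ideal n E (alg_corank n E) = UNIV"
  unfolding alg_corank_def
  by (rule GreatestI_nat[of _ 0 n]) (use critical_ideal_0 critical_ideal_ne_UNIV_if_gt not_le in blast)+

lemma alg_corank_eqI:
  assumes "critical_ideal n E k = UNIV" and "\<And>j. k < j \<Longrightarrow> critical_ideal n E j \<noteq> UNIV"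
  shows "alg_corank n E = k"
  unfolding alg_corank_def using assms by (intro Greatest_equality) (auto simp: not_less[symmetric])

section \<open>Null vectors over \<open>GF(2)\<close>\<close>

definition simple_graph_on :: "nat set \<Rightarrow> (nat \<Rightarrow> nat \<Rightarrow> bool) \<Rightarrow> bool" where
  "simple_graph_on V E \<longleftrightarrow> (\<forall>u\<in>V. \<forall>v\<in>V. E u v \<longrightarrow> E v u) \<and> (\<forall>u\<in>V. \<not> E u u)"

text \<open>Over \<open>GF(2)\<close> the off-diagonal entries \<open>-1\<close> of \<open>L(G,x)\<close> become \<open>1\<close>, so \<open>u\<close> is a null vector
  of \<open>L(G,x)\<close> reduced mod 2 exactly when the following holds.\<close>

definition null_vector :: "nat set \<Rightarrow> (nat \<Rightarrow> nat \<Rightarrow> bool) \<Rightarrow> (nat \<Rightarrow> bit) \<Rightarrow> (nat \<Rightarrow> bit) \<Rightarrow> bool" where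
  "null_vector V E x u \<longleftrightarrow> (\<forall>r\<in>V. x r * u r + (\<Sum>s\<in>V. if E r s then u s else 0) = 0)"

definition mod2_nullity_ge2 :: "nat set \<Rightarrow> (nat \<Rightarrow> nat \<Rightarrow> bool) \<Rightarrow> bool" where
  "mod2_nullity_ge2 V E \<longleftrightarrow> (\<exists>x u w. null_vector V E x u \<and> null_vector V E x w \<and>
      (\<exists>r\<in>V. u r \<noteq> 0) \<and> (\<exists>r\<in>V. w r \<noteq> 0) \<and> (\<exists>r\<in>V. u r \<noteq> w r))"

(* keep GF(2) arithmetic in ring form, so that algebra_simps applies *)
declare add_bit_eq_xor [simp del] mult_bit_eq_and [simp del]

lemma bit_add_eq_0_iff: "(a::bit) + b = 0 \<longleftrightarrow> a = b"
  by (cases a; cases b) simp_all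

definition degree_mod2 :: "nat set \<Rightarrow> (nat \<Rightarrow> nat \<Rightarrow> bool) \<Rightarrow> nat \<Rightarrow> bit" where
  "degree_mod2 V E r = (\<Sum>s\<in>V. if E r s then 1 else 0)"

lemma null_vector_ones: "null_vector V E (degree_mod2 V E) (\<lambda>_. 1)"
  unfolding null_vector_def degree_mod2_def by (simp add: bit_add_eq_0_iff)

lemma null_vector_add:
  assumes "null_vector V E x u" and "null_vector V E x w"
  shows "null_vector V E x (\<lambda>r. u r + w r)"
  unfolding null_vector_def
proof
  fix r assume r: "r \<in> V"
  have "(\<Sum>s\<in>V. if E r s then u s + w s else 0)
      = (\<Sum>s\<in>V. if E r s then u s else 0) + (\<Sum>s\<in>V. if E r s then w s else 0)"
    by (simp flip: sum.distrib) (rule sum.cong, auto)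
  hence "x r * (u r + w r) + (\<Sum>s\<in>V. if E r s then u s + w s else 0)
      = (x r * u r + (\<Sum>s\<in>V. if E r s then u s else 0)) + (x r * w r + (\<Sum>s\<in>V. if E r s then w s else 0))"
    by (simp add: algebra_simps)
  thus "x r * (u r + w r) + (\<Sum>s\<in>V. if E r s then u s + w s else 0) = 0"
    using assms r unfolding null_vector_def by simp
qed

lemma null_vector_vanishing_at:
  assumes u: "null_vector V E x u" "\<exists>r\<in>V. u r \<noteq> 0"
    and w: "null_vector V E x w" "\<exists>r\<in>V. w r \<noteq> 0" and uw: "\<exists>r\<in>V. u r \<noteq> w r"
  shows "\<exists>z. null_vector V E x z \<and> z j = 0 \<and> (\<exists>r\<in>V. z r \<noteq> 0)"
proof (cases "u j = 0 \<or> w j = 0")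
  case True thus ?thesis using u w by blast
next
  case False
  hence "u j + w j = 0" by (simp add: bit_add_eq_0_iff)
  moreover have "\<exists>r\<in>V. u r + w r \<noteq> 0" using uw by (simp only: bit_add_eq_0_iff)
  ultimately show ?thesis using null_vector_add[OF u(1) w(1)] by blast
qed

lemma gen_laplacian_eval_index:
  fixes x :: "nat \<Rightarrow> bit"
  assumes "r < n" "s < n"
  shows "poly_eval x (gen_laplacian n E $$ (r, s)) = (if r = s then x r else if E r s then 1 else 0)"
  using assms by (simp add: gen_laplacian_index poly_eval.hom_uminus)

lemma gen_laplacian_eval_mult_null_vector:
  assumes "simple_graph_on {0..<n} E" and "null_vector {0..<n} E x u" and "r < n"
  shows "(\<Sum>s<n. map_mat (poly_eval x) (gen_laplacian n E) $$ (r, s) * u s) = 0"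
proof -
  have "\<not> E r r" using assms(1,3) unfolding simple_graph_on_def by simp
  hence "(\<Sum>s<n. map_mat (poly_eval x) (gen_laplacian n E) $$ (r, s) * u s)
      = (\<Sum>s<n. (if s = r then x r * u s else 0) + (if E r s then u s else 0))"
    using assms(3) by (intro sum.cong) (auto simp: gen_laplacian_eval_index)
  also have "\<dots> = x r * u r + (\<Sum>s\<in>{0..<n}. if E r s then u s else 0)"
    using assms(3) by (simp add: sum.distrib atLeast0LessThan)
  also have "\<dots> = 0" using assms(2,3) unfolding null_vector_def by simp
  finally show ?thesis .
qed

lemma minor_eval_eq_0_if_null_vector:
  assumes G: "simple_graph_on {0..<n} E" and z: "null_vector {0..<n} E x z"
    and "I \<subseteq> {0..<n}" "J \<subseteq> {0..<n}" "card I = card J"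
    and "\<forall>s<n. s \<notin> J \<longrightarrow> z s = 0" "\<exists>s\<in>J. z s \<noteq> 0"
  shows "poly_eval x (det (submatrix (gen_laplacian n E) I J)) = 0"
  unfolding poly_eval.hom_det_submatrix
  using gen_laplacian_eval_mult_null_vector[OF G z] assms(3-)
  by (intro det_submatrix_eq_0_if_null_vector) auto

lemma critical_ideal_top_ne_UNIV:
  assumes G: "simple_graph_on {0..<n} E" and "1 \<le> n"
  shows "critical_ideal n E n \<noteq> UNIV"
proof -
  let ?deg = "degree_mod2 {0..<n} E"
  have "poly_eval ?deg M = 0" if M: "M \<in> minors (gen_laplacian n E) n" for M
  proof -
    obtain I J where M: "M = det (submatrix (gen_laplacian n E) I J)"
      and IJ: "I \<subseteq> {0..<n}" "J \<subseteq> {0..<n}" "card I = n" "card J = n"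
      using M unfolding minors_def by auto
    have "J = {0..<n}" using IJ by (intro card_subset_eq) auto
    thus ?thesis unfolding M using assms IJ
      by (intro minor_eval_eq_0_if_null_vector[OF G null_vector_ones]) (auto intro: exI[of _ 0])
  qed
  thus ?thesis unfolding critical_ideal_def by (intro ideal_gen_ne_UNIV_if_hom_vanishes[OF poly_eval.comm_ring_hom_axioms]) auto
qed

lemma alg_corank_eq_pred_iff:
  assumes G: "simple_graph_on {0..<n} E"
  shows "alg_corank n E = n - 1 \<longleftrightarrow> critical_ideal n E (n - 1) = UNIV"
proof
  assume "critical_ideal n E (n - 1) = UNIV"
  moreover have "critical_ideal n E j \<noteq> UNIV" if "n - 1 < j" for j
  proof (cases "j = n")
    case True
    thus ?thesis using that critical_ideal_top_ne_UNIV[OF G] by simp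
  next
    case False
    thus ?thesis using that critical_ideal_ne_UNIV_if_gt by simp
  qed
  ultimately show "alg_corank n E = n - 1" by (rule alg_corank_eqI)
qed (use critical_ideal_alg_corank in metis)

text \<open>Every \<open>(n-1)\<close>-minor omits some column \<open>j\<close>, and a null vector vanishing at \<open>j\<close> kills it.\<close>

lemma critical_ideal_pred_ne_UNIV:
  assumes G: "simple_graph_on {0..<n} E" and "mod2_nullity_ge2 {0..<n} E"
  shows "critical_ideal n E (n - 1) \<noteq> UNIV"
proof -
  obtain x u w where u: "null_vector {0..<n} E x u" "\<exists>r\<in>{0..<n}. u r \<noteq> 0"
    and w: "null_vector {0..<n} E x w" "\<exists>r\<in>{0..<n}. w r \<noteq> 0" and uw: "\<exists>r\<in>{0..<n}. u r \<noteq> w r"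
    using assms(2) unfolding mod2_nullity_ge2_def by blast
  have "poly_eval x M = 0" if M: "M \<in> minors (gen_laplacian n E) (n - 1)" for M
  proof -
    obtain I J where M: "M = det (submatrix (gen_laplacian n E) I J)"
      and IJ: "I \<subseteq> {0..<n}" "J \<subseteq> {0..<n}" "card I = n - 1" "card J = n - 1"
      using M unfolding minors_def by auto
    have "J \<noteq> {0..<n}" using IJ(4) u(2) by auto
    then obtain j where j: "j < n" "j \<notin> J" using IJ(2) by (meson atLeastLessThan_iff subsetI subset_antisym)
    have J: "J = {0..<n} - {j}" using IJ(2,4) j by (intro card_subset_eq) auto
    obtain z where z: "null_vector {0..<n} E x z" "z j = 0" "\<exists>r\<in>{0..<n}. z r \<noteq> 0"
      using null_vector_vanishing_at[OF u w uw] by blast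
    have "\<exists>s\<in>J. z s \<noteq> 0" using z(2,3) unfolding J by (metis DiffI singletonD)
    thus ?thesis unfolding M using IJ J z(2)
      by (intro minor_eval_eq_0_if_null_vector[OF G z(1)]) auto
  qed
  thus ?thesis unfolding critical_ideal_def by (intro ideal_gen_ne_UNIV_if_hom_vanishes[OF poly_eval.comm_ring_hom_axioms]) auto
qed

lemma mod2_nullity_ge2_if_isolated:
  assumes G: "simple_graph_on V E" and z: "z \<in> V" "\<forall>s\<in>V. \<not> E z s" and y: "y \<in> V" "y \<noteq> z"
  shows "mod2_nullity_ge2 V E"
proof -
  let ?x = "degree_mod2 V E" and ?u = "\<lambda>r. if r = z then 1 else 0 :: bit"
  have "\<not> E r z" if "r \<in> V" for r using G z that unfolding simple_graph_on_def by blast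
  hence "null_vector V E ?x ?u"
    using z unfolding null_vector_def degree_mod2_def by (auto intro!: sum.neutral)
  moreover have "null_vector V E ?x (\<lambda>r. 1 + ?u r)"
    using null_vector_add[OF null_vector_ones calculation] .
  ultimately show ?thesis
    unfolding mod2_nullity_ge2_def using z y
    by (intro exI[of _ ?x] exI[of _ ?u] exI[of _ "\<lambda>r. 1 + ?u r"] conjI) (auto simp: bit_add_eq_0_iff)
qed

section \<open>The path has a unit \<open>(n-1)\<close>-minor\<close>

text \<open>Summing \<open>r i \<le> c (p i)\<close> over all rows gives equality, because both sides enumerate
  \<open>{0..<m}\<close>.\<close>

lemma permutation_on_relabelled_diagonal:
  fixes M :: "'a::zero mat"
  assumes r: "bij_betw r {0..<m} {0..<m}" and c: "bij_betw c {0..<m} {0..<m}"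
    and upper: "\<And>i j. i < m \<Longrightarrow> j < m \<Longrightarrow> M $$ (i, j) \<noteq> 0 \<Longrightarrow> r i \<le> c j"
    and p: "p permutes {0..<m}" and nz: "\<forall>i<m. M $$ (i, p i) \<noteq> 0" and i: "i < m"
  shows "c (p i) = r i"
proof -
  have pb: "bij_betw p {0..<m} {0..<m}" using p by (rule permutes_imp_bij)
  have le: "\<forall>i\<in>{0..<m}. r i \<le> c (p i)" using upper nz p by (auto simp: permutes_in_image)
  have sums: "(\<Sum>i\<in>{0..<m}. c (p i)) = (\<Sum>i\<in>{0..<m}. r i)"
    using sum.reindex_bij_betw[OF bij_betw_trans[OF pb c], of id] sum.reindex_bij_betw[OF r, of id]
    by simp
  show ?thesis by (rule sum_mono_inv[OF sums[symmetric], symmetric]) (use le i in auto)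
qed

text \<open>Hence only the permutation \<open>c\<inverse> \<circ> r\<close> survives in the Leibniz expansion.\<close>

lemma det_dvd_one_if_triangular_up_to_relabelling:
  fixes M :: "'a::comm_ring_1 mat"
  assumes M: "M \<in> carrier_mat m m"
    and r: "bij_betw r {0..<m} {0..<m}" and c: "bij_betw c {0..<m} {0..<m}"
    and upper: "\<And>i j. i < m \<Longrightarrow> j < m \<Longrightarrow> M $$ (i, j) \<noteq> 0 \<Longrightarrow> r i \<le> c j"
    and diag: "\<And>i j. i < m \<Longrightarrow> j < m \<Longrightarrow> r i = c j \<Longrightarrow> M $$ (i, j) dvd 1"
  shows "det M dvd 1"
proof -
  define p0 where "p0 i = (if i < m then the_inv_into {0..<m} c (r i) else i)" for i
  have p0: "c (p0 i) = r i" "p0 i < m" if "i < m" for i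
  proof -
    have "r i \<in> {0..<m}" using r that unfolding bij_betw_def by auto
    thus "c (p0 i) = r i" "p0 i < m"
      using f_the_inv_into_f_bij_betw[OF c] the_inv_into_into[of c "{0..<m}" "r i" "{0..<m}"] c that
      unfolding p0_def bij_betw_def by auto
  qed
  have p0_perm: "p0 permutes {0..<m}"
  proof (rule bij_imp_permutes)
    have "bij_betw (the_inv_into {0..<m} c \<circ> r) {0..<m} {0..<m}"
      by (rule bij_betw_trans[OF r bij_betw_the_inv_into[OF c]])
    thus "bij_betw p0 {0..<m} {0..<m}" by (rule bij_betw_cong[THEN iffD1, rotated]) (simp add: p0_def)
  qed (simp add: p0_def)
  have unique: "p = p0" if p: "p permutes {0..<m}" and nz: "\<forall>i<m. M $$ (i, p i) \<noteq> 0" for p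
  proof -
    have "c (p i) = c (p0 i)" if "i < m" for i
      using permutation_on_relabelled_diagonal[OF r c upper p nz that] p0 that by simp
    hence "p i = p0 i" if "i < m" for i
      using that p0(2) permutes_in_image[OF p] c unfolding bij_betw_def inj_on_def by auto
    moreover have "p i = p0 i" if "\<not> i < m" for i using permutes_not_in[OF p] that by (simp add: p0_def)
    ultimately show ?thesis by blast
  qed
  have "det M = signof p0 * (\<Prod>i = 0..<m. M $$ (i, p0 i))"
  proof -
    let ?g = "\<lambda>p. signof p * (\<Prod>i = 0..<m. M $$ (i, p i))"
    have "det M = (\<Sum>p\<in>{p. p permutes {0..<m}}. ?g p)" using M by (simp add: det_def)
    also have "\<dots> = ?g p0 + (\<Sum>p\<in>{p. p permutes {0..<m}} - {p0}. ?g p)"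
      by (rule sum.remove) (use p0_perm finite_permutations in auto)
    also have "(\<Sum>p\<in>{p. p permutes {0..<m}} - {p0}. ?g p) = 0"
    proof (intro sum.neutral ballI)
      fix p assume "p \<in> {p. p permutes {0..<m}} - {p0}"
      then obtain i where "i < m" "M $$ (i, p i) = 0" using unique by blast
      hence "(\<Prod>i = 0..<m. M $$ (i, p i)) = 0" by (intro prod_zero) auto
      thus "?g p = 0" by simp
    qed
    finally show ?thesis by simp
  qed
  moreover have "signof p0 dvd (1::'a)" by (simp add: sign_def)
  moreover have "(\<Prod>i = 0..<m. M $$ (i, p0 i)) dvd 1" 
    using prod_dvd_prod[of "{0..<m}" "\<lambda>i. M $$ (i, p0 i)" "\<lambda>_. 1"] diag p0 by simp
  ultimately show ?thesis by simp
qed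

lemma bij_betw_pred: "bij_betw (\<lambda>t. t - 1) ({0..<n} - {0}) {0..<n - 1 :: nat}"
proof -
  have "(\<lambda>t. t - 1) ` ({0..<n} - {0}) = {0..<n - 1}"
  proof
    show "{0..<n - 1} \<subseteq> (\<lambda>t. t - 1) ` ({0..<n} - {0})"
    proof
      fix t assume "t \<in> {0..<n - 1}"
      thus "t \<in> (\<lambda>t. t - 1) ` ({0..<n} - {0})" by (intro image_eqI[of t _ "Suc t"]) auto
    qed
  qed auto
  moreover have "inj_on (\<lambda>t. t - 1) ({0..<n} - {0})" by (auto simp: inj_on_def)
  ultimately show ?thesis by (simp add: bij_betw_def)
qed

lemma bij_betw_pick_Diff:
  assumes f: "bij_betw f {0..<n} {0..<n}" and a: "a < n"
  shows "bij_betw (\<lambda>i. f (pick ({0..<n} - {a}) i)) {0..<n - 1} ({0..<n} - {f a})"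
proof -
  have "bij_betw f ({0..<n} - {a}) ({0..<n} - {f a})"
    using a bij_betwE[OF f] by (intro bij_betw_DiffI[OF f]) auto
  from bij_betw_trans[OF bij_betw_pick this] show ?thesis using a by (simp add: comp_def)
qed

text \<open>Deleting the row of the first vertex and the column of the last vertex of the path leaves a
  matrix that is triangular (with diagonal entries \<open>-1\<close>) once rows and columns are ordered along
  the path.\<close>

lemma det_path_minor_dvd_one:
  assumes f: "bij_betw f {0..<n} {0..<n}" and e: "\<forall>u<n. \<forall>v<n. E u v \<longleftrightarrow> path_graph (f u) (f v)"
    and a: "a < n" "f a = 0" and b: "b < n" "f b = n - 1"
  shows "det (submatrix (gen_laplacian n E) ({0..<n} - {a}) ({0..<n} - {b})) dvd 1"
proof -
  define I J m where "I = {0..<n} - {a}" and "J = {0..<n} - {b}" and "m = n - 1"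
  let ?L = "gen_laplacian n E" and ?M = "submatrix (gen_laplacian n E) I J"
  define r c where "r i = f (pick I i) - 1" and "c j = f (pick J j)" for i j
  have IJ: "I \<subseteq> {0..<n}" "J \<subseteq> {0..<n}" "card I = m" "card J = m"
    using a b unfolding I_def J_def m_def by auto
  have r: "bij_betw r {0..<m} {0..<m}"
    using bij_betw_trans[OF bij_betw_pick_Diff[OF f a(1), unfolded a(2)] bij_betw_pred]
    unfolding r_def I_def m_def by (simp add: comp_def)
  have "{0..<n} - {n - 1} = {0..<m}" using b(1) unfolding m_def by auto
  hence c: "bij_betw c {0..<m} {0..<m}"
    using bij_betw_pick_Diff[OF f b(1)] b(2) unfolding c_def J_def m_def by simp
  have entry: "?M $$ (i, j) = ?L $$ (pick I i, pick J j)" "pick I i \<in> I" "pick J j \<in> J"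
    "pick I i < n" "pick J j < n" if "i < m" "j < m" for i j
    using that IJ pick_in_set[of i I] pick_in_set[of j J] by (auto simp: submatrix_index_subset)
  have fpos: "1 \<le> f u" if "u \<in> I" for u
  proof -
    have "f u \<noteq> f a" using that a(1) f unfolding I_def bij_betw_def inj_on_def by auto
    thus ?thesis using a(2) by simp
  qed
  have "det ?M dvd 1"
  proof (rule det_dvd_one_if_triangular_up_to_relabelling[OF _ r c])
    show "?M \<in> carrier_mat m m"
      using dim_submatrix_subset(1)[of I ?L J] dim_submatrix_subset(2)[of J ?L I] IJ
      unfolding carrier_mat_def by simp
  next
    fix i j assume ij: "i < m" "j < m" and "?M $$ (i, j) \<noteq> 0"
    hence "pick I i = pick J j \<or> E (pick I i) (pick J j)"
      using entry[OF ij] by (auto simp: gen_laplacian_index split: if_splits)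
    thus "r i \<le> c j" using e entry[OF ij] unfolding r_def c_def path_graph_def by auto
  next
    fix i j assume ij: "i < m" "j < m" and "r i = c j"
    hence "f (pick I i) = f (pick J j) + 1" using fpos entry[OF ij] unfolding r_def c_def by fastforce
    hence "E (pick I i) (pick J j)" "pick I i \<noteq> pick J j"
      using e entry[OF ij] unfolding path_graph_def by auto
    thus "?M $$ (i, j) dvd 1" using entry[OF ij] by (simp add: gen_laplacian_index)
  qed
  thus ?thesis unfolding I_def J_def .
qed

lemma critical_ideal_pred_eq_UNIV_if_path:
  assumes iso: "graph_iso n E path_graph" and n: "1 \<le> n"
  shows "critical_ideal n E (n - 1) = UNIV"
proof -
  obtain f where f: "bij_betw f {0..<n} {0..<n}" and e: "\<forall>u<n. \<forall>v<n. E u v \<longleftrightarrow> path_graph (f u) (f v)"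
    using iso unfolding graph_iso_def by auto
  have "0 \<in> f ` {0..<n}" "n - 1 \<in> f ` {0..<n}" using f n unfolding bij_betw_def by auto
  then obtain a b where a: "a < n" "f a = 0" and b: "b < n" "f b = n - 1" by auto
  have "det (submatrix (gen_laplacian n E) ({0..<n} - {a}) ({0..<n} - {b})) \<in> minors (gen_laplacian n E) (n - 1)"
    using a b unfolding minors_def by (intro CollectI exI conjI) auto
  thus ?thesis
    using det_path_minor_dvd_one[OF f e a b] unfolding critical_ideal_def by (intro ideal_gen_eq_UNIV_if_unit)
qed

section \<open>Local complementation\<close>

text \<open>Pivoting \<open>L(G,x)\<close> over \<open>GF(2)\<close> on a diagonal entry \<open>x\<^sub>v = 1\<close> toggles the adjacency among the
  neighbours of \<open>v\<close> and the diagonal entries \<open>x\<^sub>r\<close> at these neighbours; the graph part of the Schur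
  complement is the following local complement of \<open>G\<close> at \<open>v\<close>, restricted to \<open>V - {v}\<close>.\<close>

definition local_compl :: "(nat \<Rightarrow> nat \<Rightarrow> bool) \<Rightarrow> nat \<Rightarrow> nat \<Rightarrow> nat \<Rightarrow> bool" where
  "local_compl E v a b \<longleftrightarrow> E a b \<noteq> (E v a \<and> E v b \<and> a \<noteq> b)"

lemma simple_graph_on_local_compl:
  "simple_graph_on V E \<Longrightarrow> simple_graph_on (V - {v}) (local_compl E v)"
  unfolding simple_graph_on_def local_compl_def by blast

lemma bit_if_xor: "(if P \<noteq> Q then a else 0) = (if P then a else 0) + (if Q then a else (0::bit))"
  by (auto simp: bit_add_eq_0_iff)

lemma null_vector_lift:
  assumes fin: "finite V" and v: "v \<in> V" and G: "simple_graph_on V E"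
    and u: "null_vector (V - {v}) (local_compl E v) x u"
  defines "c \<equiv> (\<Sum>s\<in>V - {v}. if E v s then u s else 0)"
  shows "null_vector V E (\<lambda>r. if r = v then 1 else if E v r then x r + 1 else x r)
           (\<lambda>r. if r = v then c else u r)"
  unfolding null_vector_def
proof
  fix r assume r: "r \<in> V"
  let ?U = "\<lambda>r. if r = v then c else u r" and ?W = "V - {v}"
  let ?S = "\<Sum>s\<in>?W. if E r s then u s else 0"
  have "\<not> E v v" using G v unfolding simple_graph_on_def by simp
  have "(\<Sum>s\<in>?W. if E r s then ?U s else 0) = ?S" by (rule sum.cong) auto
  hence row: "(\<Sum>s\<in>V. if E r s then ?U s else 0) = (if E r v then c else 0) + ?S"
    using sum.remove[OF fin v, of "\<lambda>s. if E r s then ?U s else 0"] by simp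
  show "(if r = v then 1 else if E v r then x r + 1 else x r) * ?U r + (\<Sum>s\<in>V. if E r s then ?U s else 0) = 0"
  proof (cases "r = v")
    case True
    thus ?thesis using row \<open>\<not> E v v\<close> by (simp add: c_def)
  next
    case False
    hence rW: "r \<in> ?W" using r by simp
    have toggled: "(\<Sum>s\<in>?W. if E v r \<and> E v s \<and> r \<noteq> s then u s else 0) = (if E v r then c + u r else 0)"
    proof (cases "E v r")
      case True
      have "c = u r + (\<Sum>s\<in>?W - {r}. if E v s then u s else 0)"
        unfolding c_def using fin rW True by (simp add: sum.remove[of ?W r])
      moreover have "(\<Sum>s\<in>?W. if E v r \<and> E v s \<and> r \<noteq> s then u s else 0)
          = (\<Sum>s\<in>?W - {r}. if E v s then u s else 0)"
        using fin rW True by (simp add: sum.remove[of ?W r])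
      ultimately show ?thesis using True by (simp add: algebra_simps)
    qed simp
    have "x r * u r + (?S + (\<Sum>s\<in>?W. if E v r \<and> E v s \<and> r \<noteq> s then u s else 0)) = 0"
      using u rW unfolding null_vector_def local_compl_def bit_if_xor sum.distrib by blast
    hence "x r * u r + ?S + (if E v r then c + u r else 0) = 0" by (simp only: toggled add.assoc)
    moreover have "E r v = E v r" using G r v unfolding simple_graph_on_def by blast
    ultimately show ?thesis using False row by (cases "E v r") (simp_all add: algebra_simps)
  qed
qed

lemma mod2_nullity_ge2_lift:
  assumes "finite V" "v \<in> V" "simple_graph_on V E"
    and "mod2_nullity_ge2 (V - {v}) (local_compl E v)"
  shows "mod2_nullity_ge2 V E"
proof -
  obtain x u w where u: "null_vector (V - {v}) (local_compl E v) x u"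
    and w: "null_vector (V - {v}) (local_compl E v) x w"
    and nz: "\<exists>r\<in>V - {v}. u r \<noteq> 0" "\<exists>r\<in>V - {v}. w r \<noteq> 0" "\<exists>r\<in>V - {v}. u r \<noteq> w r"
    using assms(4) unfolding mod2_nullity_ge2_def by blast
  define lift :: "(nat \<Rightarrow> bit) \<Rightarrow> nat \<Rightarrow> bit"
    where "lift y r = (if r = v then (\<Sum>s\<in>V - {v}. if E v s then y s else 0) else y r)" for y r
  have "null_vector V E (\<lambda>r. if r = v then 1 else if E v r then x r + 1 else x r) (lift u)"
    "null_vector V E (\<lambda>r. if r = v then 1 else if E v r then x r + 1 else x r) (lift w)"
    unfolding lift_def using null_vector_lift[OF assms(1-3) u] null_vector_lift[OF assms(1-3) w] by simp_all
  moreover have "\<exists>r\<in>V. lift u r \<noteq> 0" "\<exists>r\<in>V. lift w r \<noteq> 0" "\<exists>r\<in>V. lift u r \<noteq> lift w r"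
    using nz unfolding lift_def by (metis DiffE singletonI)+
  ultimately show ?thesis unfolding mod2_nullity_ge2_def by blast
qed

definition nbhd :: "nat set \<Rightarrow> (nat \<Rightarrow> nat \<Rightarrow> bool) \<Rightarrow> nat \<Rightarrow> nat set" where
  "nbhd V E r = {s\<in>V. E r s}"

definition path_enum :: "nat set \<Rightarrow> (nat \<Rightarrow> nat \<Rightarrow> bool) \<Rightarrow> (nat \<Rightarrow> nat) \<Rightarrow> bool" where
  "path_enum V E f \<longleftrightarrow> bij_betw f V {0..<card V} \<and> (\<forall>a\<in>V. \<forall>b\<in>V. E a b \<longleftrightarrow> path_graph (f a) (f b))"

definition path_on :: "nat set \<Rightarrow> (nat \<Rightarrow> nat \<Rightarrow> bool) \<Rightarrow> bool" where
  "path_on V E \<longleftrightarrow> (\<exists>f. path_enum V E f)"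

lemma graph_iso_path_graph_iff: "graph_iso n E path_graph \<longleftrightarrow> path_on {0..<n} E"
  by (simp add: graph_iso_def path_on_def path_enum_def Ball_def)

lemma nbhd_subset: "nbhd V E r \<subseteq> V"
  unfolding nbhd_def by auto

lemma finite_nbhd: "finite V \<Longrightarrow> finite (nbhd V E r)"
  unfolding nbhd_def by auto

lemma path_on_cong: "\<forall>a\<in>V. \<forall>b\<in>V. E a b = F a b \<Longrightarrow> path_on V E = path_on V F"
  unfolding path_on_def path_enum_def by auto

lemma path_on_if_card_le_1:
  assumes "finite V" "card V \<le> 1" "simple_graph_on V E"
  shows "path_on V E"
proof (cases "V = {}")
  case True
  thus ?thesis unfolding path_on_def path_enum_def by auto
next
  case False
  then obtain a where "V = {a}" using assms(1,2) by (metis card_0_eq card_1_singleton_iff le_Suc_eq One_nat_def le_zero_eq)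
  moreover have "\<not> E a a" using assms(3) calculation unfolding simple_graph_on_def by auto
  ultimately show ?thesis unfolding path_on_def path_enum_def path_graph_def
    by (intro exI[of _ "\<lambda>_. 0"]) (auto simp: bij_betw_def)
qed

lemma card_nbhd_path_enum:
  assumes f: "path_enum V E f" and r: "r \<in> V"
  shows "card (nbhd V E r) = card {t\<in>{0..<card V}. path_graph (f r) t}"
proof -
  have bij: "bij_betw f V {0..<card V}" and e: "\<forall>a\<in>V. \<forall>b\<in>V. E a b \<longleftrightarrow> path_graph (f a) (f b)"
    using f unfolding path_enum_def by auto
  have "f ` nbhd V E r = {t\<in>{0..<card V}. path_graph (f r) t}"
  proof
    show "f ` nbhd V E r \<subseteq> {t\<in>{0..<card V}. path_graph (f r) t}"
      using bij e r unfolding nbhd_def bij_betw_def by auto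
    show "{t\<in>{0..<card V}. path_graph (f r) t} \<subseteq> f ` nbhd V E r"
    proof
      fix t assume t: "t \<in> {t\<in>{0..<card V}. path_graph (f r) t}"
      then obtain s where "s \<in> V" "f s = t" using bij unfolding bij_betw_def by (metis (no_types, lifting) imageE mem_Collect_eq)
      thus "t \<in> f ` nbhd V E r" using t e r unfolding nbhd_def by auto
    qed
  qed
  moreover have "inj_on f (nbhd V E r)" using bij nbhd_subset unfolding bij_betw_def by (rule inj_on_subset[OF conjunct1])
  ultimately show ?thesis by (metis card_image)
qed

lemma card_nbhd_le_2_if_path_on:
  assumes "path_on V E" "r \<in> V"
  shows "card (nbhd V E r) \<le> 2"
proof -
  obtain f where f: "path_enum V E f" using assms(1) unfolding path_on_def by blast
  have "{t\<in>{0..<card V}. path_graph (f r) t} \<subseteq> {f r + 1, f r - 1}" unfolding path_graph_def by auto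
  hence "card {t\<in>{0..<card V}. path_graph (f r) t} \<le> card {f r + 1, f r - 1}" by (intro card_mono) auto
  also have "\<dots> \<le> 2" by (simp add: card_insert_le_m1)
  finally show ?thesis using card_nbhd_path_enum[OF f assms(2)] by simp
qed

lemma nbhd_ne_empty_if_path_on:
  assumes "path_on V E" "r \<in> V" "2 \<le> card V"
  shows "nbhd V E r \<noteq> {}"
proof -
  obtain f where f: "path_enum V E f" using assms(1) unfolding path_on_def by blast
  have "f r < card V" using f assms(2) unfolding path_enum_def bij_betw_def by auto
  hence "f r + 1 \<in> {t\<in>{0..<card V}. path_graph (f r) t} \<or> f r - 1 \<in> {t\<in>{0..<card V}. path_graph (f r) t}"
    using assms(3) unfolding path_graph_def by auto
  hence "card {t\<in>{0..<card V}. path_graph (f r) t} \<noteq> 0" by auto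
  thus ?thesis using card_nbhd_path_enum[OF f assms(2)] by auto
qed

lemma path_on_has_leaf:
  assumes "path_on V E" "finite V" "V \<noteq> {}"
  shows "\<exists>r\<in>V. card (nbhd V E r) \<le> 1"
proof -
  obtain f where f: "path_enum V E f" using assms(1) unfolding path_on_def by blast
  have "0 \<in> f ` V" using f assms(2,3) unfolding path_enum_def bij_betw_def by (simp add: card_gt_0_iff)
  then obtain r where r: "r \<in> V" "f r = 0" by auto
  have "{t\<in>{0..<card V}. path_graph 0 t} \<subseteq> {1}" unfolding path_graph_def by auto
  hence "card {t\<in>{0..<card V}. path_graph 0 t} \<le> 1" using card_mono[of "{1::nat}"] by fastforce
  hence "card (nbhd V E r) \<le> 1" using card_nbhd_path_enum[OF f r(1)] r(2) by simp
  thus ?thesis using r(1) by blast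
qed

lemma path_on_no_triangle:
  assumes "path_on V E" "a \<in> V" "b \<in> V" "c \<in> V" "E a b" "E b c" "E a c"
  shows False
proof -
  obtain f where "\<forall>a\<in>V. \<forall>b\<in>V. E a b \<longleftrightarrow> path_graph (f a) (f b)"
    using assms(1) unfolding path_on_def path_enum_def by blast
  hence "path_graph (f a) (f b)" "path_graph (f b) (f c)" "path_graph (f a) (f c)"
    using assms by blast+
  thus False unfolding path_graph_def by presburger
qed

lemma path_enum_reverse:
  assumes "path_enum V E f"
  shows "path_enum V E (\<lambda>r. card V - 1 - f r)"
proof -
  let ?m = "card V"
  have f: "bij_betw f V {0..<?m}" and e: "\<forall>a\<in>V. \<forall>b\<in>V. E a b \<longleftrightarrow> path_graph (f a) (f b)"
    using assms unfolding path_enum_def by auto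
  have "bij_betw (\<lambda>i. ?m - 1 - i) {0..<?m} {0..<?m}"
    by (rule bij_betw_byWitness[of _ "\<lambda>i. ?m - 1 - i"]) auto
  hence "bij_betw (\<lambda>r. ?m - 1 - f r) V {0..<?m}"
    using bij_betw_trans[OF f] by (simp add: comp_def)
  moreover have "path_graph (?m - 1 - f a) (?m - 1 - f b) = path_graph (f a) (f b)" if "a \<in> V" "b \<in> V" for a b
    using bij_betwE[OF f] that unfolding path_graph_def by fastforce
  ultimately show ?thesis using e unfolding path_enum_def by simp
qed

lemma path_enum_extend:
  assumes fin: "finite V" and G: "simple_graph_on V E" and l: "l \<in> V" and w: "w \<in> V - {l}"
    and leaf: "\<forall>s\<in>V. E l s \<longleftrightarrow> s = w"
    and f: "path_enum (V - {l}) E f" and fw: "f w = card (V - {l}) - 1"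
  shows "path_on V E"
proof -
  let ?m = "card V - 1"
  have bij: "bij_betw f (V - {l}) {0..<?m}" and e: "\<forall>a\<in>V - {l}. \<forall>b\<in>V - {l}. E a b \<longleftrightarrow> path_graph (f a) (f b)"
    using f fin l unfolding path_enum_def by auto
  have last: "f w = ?m - 1" using fw fin l by simp
  define g where "g r = (if r \<in> V - {l} then f r else ?m)" for r
  have "bij_betw g ((V - {l}) \<union> {l}) ({0..<?m} \<union> {?m})"
    unfolding g_def by (rule bij_betw_disjoint_Un[OF bij]) auto
  moreover have "0 < card V" using l fin card_gt_0_iff by blast
  hence "(V - {l}) \<union> {l} = V" "{0..<?m} \<union> {?m} = {0..<card V}" using l by auto
  ultimately have "bij_betw g V {0..<card V}" by simp
  moreover have "E a b \<longleftrightarrow> path_graph (g a) (g b)" if a: "a \<in> V" and b: "b \<in> V" for a b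
  proof -
    have fr: "f r < ?m" if "r \<in> V - {l}" for r using bij_betwE[OF bij] that by auto
    have to_l: "E r l \<longleftrightarrow> path_graph (f r) ?m" if r: "r \<in> V - {l}" for r
    proof -
      have "path_graph (f r) ?m \<longleftrightarrow> f r = f w" using fr[OF r] last unfolding path_graph_def by auto
      also have "\<dots> \<longleftrightarrow> r = w" using bij r w unfolding bij_betw_def inj_on_def by blast
      finally show ?thesis using leaf G l r unfolding simple_graph_on_def by auto
    qed
    have "\<not> E l l" using G l unfolding simple_graph_on_def by auto
    moreover have "E a b = E b a" using G a b unfolding simple_graph_on_def by blast
    moreover have "path_graph (g a) (g b) = path_graph (g b) (g a)" unfolding path_graph_def by auto
    ultimately show ?thesis using e to_l a b unfolding g_def path_graph_def by (cases "a = l"; cases "b = l") auto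
  qed
  ultimately show ?thesis unfolding path_on_def path_enum_def by blast
qed

section \<open>Graphs all of whose local complements are paths\<close>

lemma card_ge_3_if_degree_ge_2:
  assumes "finite V" "simple_graph_on V E" "v \<in> V" "2 \<le> card (nbhd V E v)"
  shows "3 \<le> card V"
proof -
  have "nbhd V E v \<subseteq> V - {v}" using assms(2,3) unfolding nbhd_def simple_graph_on_def by auto
  hence "card (nbhd V E v) \<le> card (V - {v})" using assms(1) by (intro card_mono) auto
  thus ?thesis using assms by (simp add: card_Diff_singleton)
qed

lemma not_path_on_local_compl_if_far:
  assumes G: "simple_graph_on V E" and "v \<in> V" "w \<in> V" "v \<noteq> w" "\<not> E v w" "3 \<le> card (nbhd V E w)"
  shows "\<not> path_on (V - {v}) (local_compl E v)"
proof
  assume p: "path_on (V - {v}) (local_compl E v)"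
  have "nbhd (V - {v}) (local_compl E v) w = nbhd V E w"
    using assms unfolding nbhd_def local_compl_def simple_graph_on_def by auto
  thus False using card_nbhd_le_2_if_path_on[OF p, of w] assms by auto
qed

lemma not_path_on_local_compl_if_two_universal:
  assumes "finite V" "simple_graph_on V E" "a \<in> V" "b \<in> V" "a \<noteq> b" "3 \<le> card V"
    and "\<forall>s\<in>V. s \<noteq> a \<longrightarrow> E a s" "\<forall>s\<in>V. s \<noteq> b \<longrightarrow> E b s"
  shows "\<not> path_on (V - {a}) (local_compl E a)"
proof
  assume p: "path_on (V - {a}) (local_compl E a)"
  have "nbhd (V - {a}) (local_compl E a) b = {}"
    using assms unfolding nbhd_def local_compl_def simple_graph_on_def by auto
  moreover have "2 \<le> card (V - {a})" using assms by (simp add: card_Diff_singleton)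
  ultimately show False using nbhd_ne_empty_if_path_on[OF p, of b] assms by auto
qed

lemma not_path_on_local_compl_if_triangle:
  assumes "finite V" "simple_graph_on V E" "v \<in> V" "3 \<le> card V"
    and v: "nbhd V E v = {a, b}" and a: "nbhd V E a = {v, b}"
  shows "\<not> path_on (V - {v}) (local_compl E v)"
proof
  assume p: "path_on (V - {v}) (local_compl E v)"
  have "a \<in> nbhd V E v" using v by simp
  hence "a \<in> V - {v}" "E v a" using assms(2) unfolding nbhd_def simple_graph_on_def by auto
  moreover have "\<not> local_compl E v a s" if s: "s \<in> V - {v}" for s
  proof -
    have "s \<in> nbhd V E a \<longleftrightarrow> s \<in> {v, b}" "s \<in> nbhd V E v \<longleftrightarrow> s \<in> {a, b}" using v a by simp_all
    hence "E a s \<longleftrightarrow> s = b" "E v s \<longleftrightarrow> s = a \<or> s = b" using s unfolding nbhd_def by auto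
    moreover have "b \<in> nbhd V E a" using a by simp
    hence "a \<noteq> b" using assms(2) \<open>a \<in> V - {v}\<close> unfolding nbhd_def simple_graph_on_def by auto
    ultimately show ?thesis using \<open>E v a\<close> unfolding local_compl_def by auto
  qed
  hence "nbhd (V - {v}) (local_compl E v) a = {}" unfolding nbhd_def by auto
  moreover have "2 \<le> card (V - {v})" using assms by (simp add: card_Diff_singleton)
  ultimately show False using nbhd_ne_empty_if_path_on[OF p, of a] by auto
qed

text \<open>Local complementation at a vertex whose two neighbours \<open>a, b\<close> are not adjacent joins \<open>a\<close>
  and \<open>b\<close>, so no degree drops below two.\<close>

lemma degree_local_compl_ge_2:
  assumes fin: "finite V" and G: "simple_graph_on V E" and "v \<in> V"
    and v: "nbhd V E v = {a, b}" and "a \<noteq> b" "\<not> E a b" and deg: "2 \<le> card (nbhd V E a)"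
  shows "2 \<le> card (nbhd (V - {v}) (local_compl E v) a)"
proof -
  have "nbhd V E a \<noteq> {v}" using deg by auto
  moreover have "nbhd V E a \<noteq> {}" using deg by auto
  ultimately obtain c where c: "c \<in> V" "E a c" "c \<noteq> v" unfolding nbhd_def by blast
  have "a \<in> nbhd V E v" "b \<in> nbhd V E v" using v by simp_all
  hence ab: "a \<in> V" "b \<in> V" "E v a" "E v b" unfolding nbhd_def by auto
  have "c \<notin> nbhd V E v" using c G assms(6) ab(1) unfolding v simple_graph_on_def by auto
  hence "\<not> E v c" "c \<noteq> b" using c assms(6) unfolding nbhd_def by auto
  hence "{b, c} \<subseteq> nbhd (V - {v}) (local_compl E v) a"
    using assms(5,6) ab c G unfolding nbhd_def local_compl_def simple_graph_on_def by auto
  moreover have "card {b, c} = 2" using \<open>c \<noteq> b\<close> by simp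
  ultimately show ?thesis using card_mono[OF finite_nbhd[OF finite_Diff[OF fin]]] by metis
qed

lemma not_path_on_local_compl_if_nonadjacent:
  assumes fin: "finite V" and G: "simple_graph_on V E" and "v \<in> V"
    and v: "nbhd V E v = {a, b}" and "a \<noteq> b" "\<not> E a b"
    and min_deg: "\<forall>r\<in>V. 2 \<le> card (nbhd V E r)"
  shows "\<not> path_on (V - {v}) (local_compl E v)"
proof
  assume p: "path_on (V - {v}) (local_compl E v)"
  have ab: "a \<in> V" "b \<in> V" "a \<noteq> v" using v assms(3) G unfolding nbhd_def simple_graph_on_def set_eq_iff by auto
  have "2 \<le> card (nbhd (V - {v}) (local_compl E v) r)" if r: "r \<in> V - {v}" for r
  proof (cases "r = a \<or> r = b")
    case neighbour: True
    show ?thesis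
    proof (cases "r = a")
      case True
      thus ?thesis using degree_local_compl_ge_2[OF fin G assms(3) v assms(5,6)] min_deg ab by simp
    next
      case False
      have "\<not> E b a" using G ab assms(6) unfolding simple_graph_on_def by blast
      moreover have "nbhd V E v = {b, a}" using v by auto
      ultimately show ?thesis
        using False neighbour degree_local_compl_ge_2[OF fin G assms(3) _ assms(5)[symmetric]] min_deg ab by simp
    qed
  next
    case False
    hence "nbhd (V - {v}) (local_compl E v) r = nbhd V E r"
      using v r G assms(3) unfolding nbhd_def local_compl_def simple_graph_on_def set_eq_iff by auto
    thus ?thesis using min_deg r by simp
  qed
  moreover obtain r where "r \<in> V - {v}" "card (nbhd (V - {v}) (local_compl E v) r) \<le> 1"
    using path_on_has_leaf[OF p] fin ab by blast
  ultimately show False by fastforce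
qed

text \<open>A vertex of degree at least three is adjacent to all others: otherwise local complementation at
  a non-neighbour keeps its degree.\<close>

lemma universal_if_local_compl_paths:
  assumes G: "simple_graph_on V E" and paths: "\<forall>v\<in>V. path_on (V - {v}) (local_compl E v)"
    and w: "w \<in> V" "3 \<le> card (nbhd V E w)"
  shows "\<forall>s\<in>V. s \<noteq> w \<longrightarrow> E w s"
proof (intro ballI impI)
  fix s assume s: "s \<in> V" "s \<noteq> w"
  show "E w s"
  proof (rule ccontr)
    assume "\<not> E w s"
    hence "\<not> E s w" using G s w unfolding simple_graph_on_def by blast
    thus False using not_path_on_local_compl_if_far[OF G s(1) w(1) s(2) _ w(2)] paths s(1) by blast
  qed
qed

lemma no_two_degree_ge_3_if_local_compl_paths:
  assumes "finite V" "simple_graph_on V E" "3 \<le> card V"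
    and paths: "\<forall>v\<in>V. path_on (V - {v}) (local_compl E v)"
    and "a \<in> V" "b \<in> V" "a \<noteq> b" "3 \<le> card (nbhd V E a)" "3 \<le> card (nbhd V E b)"
  shows False
  using not_path_on_local_compl_if_two_universal[OF assms(1,2,5-7,3)]
    universal_if_local_compl_paths[OF assms(2) paths] paths assms(5-) by blast

lemma card_nbhd_ne_2_if_local_compl_paths:
  assumes fin: "finite V" and G: "simple_graph_on V E" and card: "3 \<le> card V"
    and paths: "\<forall>v\<in>V. path_on (V - {v}) (local_compl E v)"
    and min_deg: "\<forall>r\<in>V. 2 \<le> card (nbhd V E r)" and "v \<in> V"
  shows "card (nbhd V E v) \<noteq> 2"
proof
  assume "card (nbhd V E v) = 2"
  then obtain a b where v: "v \<in> V" "nbhd V E v = {a, b}" and ab: "a \<noteq> b"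
    using \<open>v \<in> V\<close> by (auto simp: card_2_iff)
  have ab_V: "a \<in> V" "b \<in> V" "E v a" "E v b" "E a v" "E b v" "a \<noteq> v" "b \<noteq> v"
    using v G unfolding nbhd_def simple_graph_on_def set_eq_iff by auto
  have "E a b"
    using not_path_on_local_compl_if_nonadjacent[OF fin G v ab _ min_deg] paths v(1) by blast
  moreover have "E b a" using G \<open>E a b\<close> ab_V unfolding simple_graph_on_def by blast
  ultimately have "{v, b} \<subseteq> nbhd V E a" "{v, a} \<subseteq> nbhd V E b"
    using ab_V v(1) unfolding nbhd_def by auto
  moreover have "nbhd V E a \<noteq> {v, b}"
    using not_path_on_local_compl_if_triangle[OF fin G v(1) card v(2)] paths v(1) by blast
  moreover have "nbhd V E b \<noteq> {v, a}"
    using not_path_on_local_compl_if_triangle[OF fin G v(1) card, of b a] v(2) paths v(1)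
    by (auto simp: insert_commute)
  ultimately have "2 < card (nbhd V E a)" "2 < card (nbhd V E b)"
    using psubset_card_mono[OF finite_nbhd[OF fin]] ab_V
    by (metis card_2_iff psubsetI)+
  thus False using no_two_degree_ge_3_if_local_compl_paths[OF fin G card paths ab_V(1,2) ab] by simp
qed

lemma min_degree_lt_2_if_local_compl_paths:
  assumes fin: "finite V" and G: "simple_graph_on V E" and "V \<noteq> {}"
    and paths: "\<forall>v\<in>V. path_on (V - {v}) (local_compl E v)"
  shows "\<exists>r\<in>V. card (nbhd V E r) < 2"
proof (rule ccontr)
  assume "\<not> ?thesis"
  hence min_deg: "\<forall>r\<in>V. 2 \<le> card (nbhd V E r)" by auto
  obtain v0 where v0: "v0 \<in> V" using assms(3) by blast
  have card: "3 \<le> card V" using card_ge_3_if_degree_ge_2[OF fin G v0] min_deg v0 by blast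
  show False
  proof (cases "\<exists>v\<in>V. card (nbhd V E v) = 2")
    case True
    thus False using card_nbhd_ne_2_if_local_compl_paths[OF fin G card paths min_deg] by blast
  next
    case False
    hence deg3: "\<forall>r\<in>V. 3 \<le> card (nbhd V E r)" using min_deg by fastforce
    have "nbhd V E v0 \<noteq> {}" using min_deg v0 by fastforce
    then obtain a where a: "a \<in> V" "E v0 a" unfolding nbhd_def by auto
    hence "v0 \<noteq> a" using G unfolding simple_graph_on_def by auto
    thus False using no_two_degree_ge_3_if_local_compl_paths[OF fin G card paths v0 a(1)] deg3 v0 a(1) by blast
  qed
qed

text \<open>If the neighbour \<open>w\<close> of a leaf \<open>l\<close> were an inner vertex of the path \<open>V - {l}\<close>, with path
  neighbours \<open>p, q\<close>, then \<open>l, p, q\<close> would form a triangle in the local complement at \<open>w\<close>.\<close>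

lemma path_on_if_leaf:
  assumes fin: "finite V" and G: "simple_graph_on V E" and l: "l \<in> V" and leaf: "nbhd V E l = {w}"
    and paths: "\<forall>v\<in>V. path_on (V - {v}) (local_compl E v)"
  shows "path_on V E"
proof -
  have leaf': "\<forall>s\<in>V. E l s \<longleftrightarrow> s = w" using leaf unfolding nbhd_def set_eq_iff by auto
  have "w \<in> nbhd V E l" using leaf by simp
  hence w: "w \<in> V - {l}" "E l w" "E w l" using G l unfolding nbhd_def simple_graph_on_def by auto
  have "\<forall>a\<in>V - {l}. \<forall>b\<in>V - {l}. local_compl E l a b = E a b"
    using leaf' unfolding local_compl_def by auto
  hence "path_on (V - {l}) E" using paths l path_on_cong by blast
  then obtain f where f: "path_enum (V - {l}) E f" unfolding path_on_def by blast
  let ?m = "card (V - {l})"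
  have bij: "bij_betw f (V - {l}) {0..<?m}" and e: "\<forall>a\<in>V - {l}. \<forall>b\<in>V - {l}. E a b \<longleftrightarrow> path_graph (f a) (f b)"
    using f unfolding path_enum_def by auto
  have "f w = 0 \<or> f w = ?m - 1"
  proof (rule ccontr)
    assume interior: "\<not> ?thesis"
    moreover have "f w < ?m" using bij_betwE[OF bij] w(1) by auto
    ultimately have "f w - 1 \<in> {0..<?m}" "f w + 1 \<in> {0..<?m}" by auto
    then obtain p q where p: "p \<in> V - {l}" "f p = f w - 1" and q: "q \<in> V - {l}" "f q = f w + 1"
      using bij unfolding bij_betw_def by (metis imageE)
    have "E w p" "E w q" "\<not> E p q" "p \<noteq> w" "q \<noteq> w" "p \<noteq> q"
      using e w p q interior unfolding path_graph_def by auto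
    hence "local_compl E w l p" "local_compl E w p q" "local_compl E w l q"
      using w leaf' p q unfolding local_compl_def by auto
    moreover have "l \<in> V - {w}" "p \<in> V - {w}" "q \<in> V - {w}" using l w p q \<open>p \<noteq> w\<close> \<open>q \<noteq> w\<close> by auto
    ultimately show False using path_on_no_triangle paths w(1) by blast
  qed
  thus ?thesis
  proof
    assume "f w = ?m - 1"
    thus ?thesis using path_enum_extend[OF fin G l w(1) leaf' f] by blast
  next
    assume "f w = 0"
    thus ?thesis using path_enum_extend[OF fin G l w(1) leaf' path_enum_reverse[OF f]] by simp
  qed
qed

lemma path_on_if_not_mod2_nullity_ge2:
  assumes "finite V" "simple_graph_on V E" "\<not> mod2_nullity_ge2 V E"
  shows "path_on V E"
  using assms
proof (induction "card V" arbitrary: V E rule: less_induct)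
  case less
  note fin = less.prems(1) and G = less.prems(2) and nullity = less.prems(3)
  have paths: "\<forall>v\<in>V. path_on (V - {v}) (local_compl E v)"
  proof
    fix v assume v: "v \<in> V"
    have "\<not> mod2_nullity_ge2 (V - {v}) (local_compl E v)"
      using mod2_nullity_ge2_lift[OF fin v G] nullity by blast
    thus "path_on (V - {v}) (local_compl E v)"
      using less.hyps[OF card_Diff1_less[OF fin v] _ simple_graph_on_local_compl[OF G]] fin by blast
  qed
  show ?case
  proof (cases "card V \<le> 1")
    case True
    thus ?thesis using path_on_if_card_le_1 fin G by blast
  next
    case False
    then obtain l where l: "l \<in> V" "card (nbhd V E l) < 2"
      using min_degree_lt_2_if_local_compl_paths[OF fin G _ paths] by fastforce
    have "nbhd V E l \<noteq> {}"
    proof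
      assume "nbhd V E l = {}"
      moreover have "V \<noteq> {l}" using False by auto
      then obtain y where "y \<in> V" "y \<noteq> l" using l(1) by blast
      ultimately have "mod2_nullity_ge2 V E"
        using mod2_nullity_ge2_if_isolated[OF G l(1)] unfolding nbhd_def by blast
      thus False using nullity by blast
    qed
    then obtain w where "nbhd V E l = {w}"
      using l(2) finite_nbhd[OF fin] by (metis card_1_singleton_iff card_0_eq less_2_cases)
    thus ?thesis using path_on_if_leaf[OF fin G l(1) _ paths] by blast
  qed
qed

lemma critical_ideal_pred_eq_UNIV_iff_path_on:
  assumes G: "simple_graph_on {0..<n} E"
  shows "critical_ideal n E (n - 1) = UNIV \<longleftrightarrow> path_on {0..<n} E"
proof
  assume "critical_ideal n E (n - 1) = UNIV"
  thus "path_on {0..<n} E"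
    using critical_ideal_pred_ne_UNIV[OF G] path_on_if_not_mod2_nullity_ge2[OF _ G] by blast
next
  assume "path_on {0..<n} E"
  thus "critical_ideal n E (n - 1) = UNIV"
  proof (cases "n = 0")
    case False
    thus ?thesis using critical_ideal_pred_eq_UNIV_if_path \<open>path_on {0..<n} E\<close>
      by (simp add: graph_iso_path_graph_iff)
  qed (simp add: critical_ideal_0)
qed

theorem corollary3p9:
  fixes n :: nat and E :: "nat \<Rightarrow> nat \<Rightarrow> bool"
  assumes "simple_graph n E"
  shows "alg_corank n E = n - 1 \<longleftrightarrow> graph_iso n E path_graph"
proof -
  have G: "simple_graph_on {0..<n} E"
    using assms unfolding simple_graph_def simple_graph_on_def by auto
  show ?thesis
    unfolding alg_corank_eq_pred_iff[OF G] critical_ideal_pred_eq_UNIV_iff_path_on[OF G]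
      graph_iso_path_graph_iff ..
qed

end
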